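(* Let $H$ be a right Hilbert module over a $C^*$-algebra and let $Q\in\mathcal{L}(H)$ be an idempotent. Then $m(I-Q)=I-m(Q)$.
   Context: $\mathcal{L}(H)$ denotes the $C^*$-algebra of all adjointable operators on $H$, $I$ is the identity operator on $H$, $T^*$ is the adjoint of $T$, and $|T|=(T^*T)^{1/2}$ is the positive square root. $Q$ is an idempotent if $Q^2=Q$, and a projection if moreover $Q^*=Q$. For $T\in\mathcal{L}(H)$ with closed range, $T^\dagger$ denotes its Moore–Penrose inverse (the unique $X\in\mathcal{L}(H)$ with $TXT=T$, $XTX=X$, $(TX)^*=TX$, $(XT)^*=XT$). The matched projection of an idempotent $Q\in\mathcal{L}(H)$ is defined by $$m(Q)=\tfrac12\big(|Q^*|+Q^*\big)|Q^*|^\dagger\big(|Q^*|+I\big)^{-1}\big(|Q^*|+Q\big)$$ (here $|Q^*|$ has closed range, so $|Q^*|^\dagger$ exists); it is a projection. *)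

theory Defs
  imports "HOL-Analysis.Analysis"
begin

text \<open>The algebra L(H) of adjointable operators on a
Hilbert C*-module H is a unital C*-algebra, and conversely every unital C*-algebra A
is L(A_A); so the statement is phrased for an arbitrary unital C*-algebra.\<close>

class cstar_algebra = real_normed_algebra_1 + banach +
  fixes cstar :: "'a \<Rightarrow> 'a"
    and cscale :: "complex \<Rightarrow> 'a \<Rightarrow> 'a"
  assumes cstar_invol: "cstar (cstar x) = x"
    and cstar_add: "cstar (x + y) = cstar x + cstar y"
    and cstar_mult: "cstar (x * y) = cstar y * cstar x"
    and cstar_cscale: "cstar (cscale c x) = cscale (cnj c) (cstar x)"
    and cscale_add_right: "cscale c (x + y) = cscale c x + cscale c y"
    and cscale_add_left: "cscale (a + b) x = cscale a x + cscale b x"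
    and cscale_assoc: "cscale a (cscale b x) = cscale (a * b) x"
    and cscale_of_real: "cscale (complex_of_real r) x = scaleR r x"
    and norm_cscale: "norm (cscale c x) = cmod c * norm x"
    and cscale_left_mult: "cscale c x * y = cscale c (x * y)"
    and cscale_right_mult: "x * cscale c y = cscale c (x * y)"
    and cstar_identity: "norm (cstar x * x) = norm x ^ 2"

definition cstar_positive :: "'a::cstar_algebra \<Rightarrow> bool" where
  "cstar_positive p \<longleftrightarrow> (\<exists>y. p = cstar y * y)"

definition cabs :: "'a::cstar_algebra \<Rightarrow> 'a" where
  "cabs T = (THE p. cstar_positive p \<and> p * p = cstar T * T)"

definition mp_inv :: "'a::cstar_algebra \<Rightarrow> 'a" where
  "mp_inv T = (THE X. T * X * T = T \<and> X * T * X = X \<and>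
                      cstar (T * X) = T * X \<and> cstar (X * T) = X * T)"

definition ainv :: "'a::cstar_algebra \<Rightarrow> 'a" where
  "ainv T = (THE Y. T * Y = 1 \<and> Y * T = 1)"

definition matched_proj :: "'a::cstar_algebra \<Rightarrow> 'a" where
  "matched_proj Q = scaleR (1/2)
     ((cabs (cstar Q) + cstar Q) * mp_inv (cabs (cstar Q))
       * ainv (cabs (cstar Q) + 1) * (cabs (cstar Q) + Q))"

end

theory Submission
  imports Defs "HOL-Computational_Algebra.Formal_Power_Series"
begin

text \<open>For an idempotent \<open>Q\<close> put \<open>T = Q + Q\<^sup>* - 1\<close>. It is self-adjoint,
  \<open>T\<^sup>2 = 1 + k\<^sup>2\<close> with \<open>k = i(Q - Q\<^sup>*)\<close> self-adjoint, so \<open>T\<^sup>2\<close> is invertible and its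
  positive square root \<open>R = |T|\<close> is invertible and commutes with \<open>Q\<close> and \<open>Q\<^sup>*\<close>.
  All ingredients of \<open>m(Q)\<close> are then explicit words in \<open>Q, Q\<^sup>*, R\<^sup>-\<^sup>1, (1 + R)\<^sup>-\<^sup>1\<close>
  (for instance \<open>|Q\<^sup>*| = Q Q\<^sup>* R\<^sup>-\<^sup>1\<close>), and they multiply out to
  \<open>m(Q) = (1 + T R\<^sup>-\<^sup>1)/2\<close>. Replacing \<open>Q\<close> by \<open>1 - Q\<close> turns \<open>T\<close> into \<open>-T\<close> and leaves
  \<open>R\<close> unchanged, whence \<open>m(1 - Q) = (1 - T R\<^sup>-\<^sup>1)/2 = 1 - m(Q)\<close>.

  Identifying \<open>|Q\<^sup>*|\<close> needs uniqueness of positive square roots, and with positivity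
  defined as \<open>p = y\<^sup>* y\<close> this rests on the Kaplansky--Fukamiya theorem that \<open>y\<^sup>* y\<close> is
  the square of a self-adjoint element. Both are obtained without spectral theory, from
  the binomial series of \<open>\<surd>(1 - x)\<close> and the norm criterion: a self-adjoint \<open>c\<close> with
  \<open>\<parallel>c\<parallel> \<le> t\<close> is such a square iff \<open>\<parallel>t - c\<parallel> \<le> t\<close>.\<close>

declare cstar_invol [simp]

lemma cstar_zero [simp]: "cstar (0::'a::cstar_algebra) = 0"
  by (metis add_cancel_right_right cstar_add)

lemma cstar_one [simp]: "cstar (1::'a::cstar_algebra) = 1"
  by (metis cstar_invol cstar_mult mult_1_right)

lemma cstar_minus [simp]: "cstar (- x) = - cstar (x::'a::cstar_algebra)"
  by (metis add.right_inverse add_eq_0_iff cstar_add cstar_zero)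

lemma cstar_diff [simp]: "cstar (x - y) = cstar x - cstar (y::'a::cstar_algebra)"
  by (metis cstar_add cstar_minus diff_conv_add_uminus)

lemma cstar_scaleR [simp]: "cstar (r *\<^sub>R x) = r *\<^sub>R cstar (x::'a::cstar_algebra)"
  by (metis complex_cnj_complex_of_real cscale_of_real cstar_cscale)

lemma cstar_power: "cstar (x ^ n) = cstar (x::'a::cstar_algebra) ^ n"
  by (induction n) (simp_all add: cstar_mult power_commutes)

lemma norm_cstar [simp]: "norm (cstar x) = norm (x::'a::cstar_algebra)"
proof -
  have le: "norm z \<le> norm (cstar z)" for z :: 'a
  proof -
    have "norm z * norm z = norm (cstar z * z)"
      by (simp add: cstar_identity power2_eq_square)
    also have "\<dots> \<le> norm (cstar z) * norm z"
      by (rule norm_mult_ineq)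
    finally show ?thesis
      by (cases "z = 0") simp_all
  qed
  show ?thesis
    using le[of x] le[of "cstar x"] by simp
qed

lemma bounded_linear_cstar: "bounded_linear (cstar :: 'a::cstar_algebra \<Rightarrow> 'a)"
  by (rule bounded_linear_intro[where K = 1]) (simp_all add: cstar_add)

lemma cstar_suminf:
  "summable f \<Longrightarrow> cstar (suminf f) = (\<Sum>n. cstar (f n :: 'a::cstar_algebra))"
  by (metis bounded_linear.suminf bounded_linear_cstar)

lemma norm_square_self_adjoint:
  "cstar h = h \<Longrightarrow> norm (h * h) = norm (h::'a::cstar_algebra) ^ 2"
  by (metis cstar_identity)

lemma self_adjoint_square_eq_0:
  "cstar h = h \<Longrightarrow> h * h = 0 \<Longrightarrow> h = (0::'a::cstar_algebra)"
  by (metis norm_square_self_adjoint norm_zero norm_eq_zero power_eq_0_iff)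

definition imult :: "'a::cstar_algebra \<Rightarrow> 'a" where
  "imult x = cscale \<i> x"

lemma cscale_minus_one: "cscale (- 1) x = - (x::'a::cstar_algebra)"
  using cscale_of_real[of "- 1" x] by simp

lemma imult_imult [simp]: "imult (imult x) = - (x::'a::cstar_algebra)"
  by (simp add: imult_def cscale_assoc cscale_minus_one)

lemma cstar_imult [simp]: "cstar (imult x) = - imult (cstar (x::'a::cstar_algebra))"
  by (metis cscale_assoc cscale_minus_one complex_cnj_i cstar_cscale imult_def
      mult_minus1)

lemma imult_add [simp]: "imult (x + y) = imult x + imult (y::'a::cstar_algebra)"
  by (simp add: imult_def cscale_add_right)

lemma imult_minus [simp]: "imult (- x) = - imult (x::'a::cstar_algebra)"
  by (metis add.right_inverse add_eq_0_iff imult_add add_cancel_right_right)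

lemma imult_diff [simp]: "imult (x - y) = imult x - imult (y::'a::cstar_algebra)"
  by (metis imult_add imult_minus diff_conv_add_uminus)

lemma imult_mult_left [simp]: "imult x * y = imult (x * (y::'a::cstar_algebra))"
  by (simp add: imult_def cscale_left_mult)

lemma imult_mult_right [simp]: "x * imult y = imult (x * (y::'a::cstar_algebra))"
  by (simp add: imult_def cscale_right_mult)

lemma norm_imult [simp]: "norm (imult x) = norm (x::'a::cstar_algebra)"
  by (simp add: imult_def norm_cscale)

section \<open>The binomial series of the square root\<close>

definition sqrt_coeff :: "nat \<Rightarrow> real" where
  "sqrt_coeff k = (-1) ^ k * ((1/2) gchoose k)"

lemma sqrt_coeff_0 [simp]: "sqrt_coeff 0 = 1"
  by (simp add: sqrt_coeff_def)

lemma sqrt_coeff_eq_gbinomial: "sqrt_coeff k = (of_nat k - 3/2) gchoose k"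
  unfolding sqrt_coeff_def gbinomial_negated_upper[of "1/2"] by simp

lemma sqrt_coeff_Suc_neg: "sqrt_coeff (Suc j) < 0"
proof -
  have "fact (Suc j) * sqrt_coeff (Suc j) = (\<Prod>i<Suc j. of_nat (Suc j) - 3/2 - of_nat i)"
    by (simp only: sqrt_coeff_eq_gbinomial gbinomial_mult_fact atLeast0LessThan)
  also have "\<dots> = (\<Prod>i<j. of_nat j - 1/2 - of_nat i) * (- 1/2)"
    by (simp add: algebra_simps)
  also have "\<dots> < 0"
    by (intro mult_pos_neg prod_pos) (simp_all add: of_nat_less_iff[symmetric] del: of_nat_less_iff)
  finally show ?thesis
    by (simp add: mult_less_0_iff)
qed

lemma sqrt_coeff_partial_sum_nonneg: "0 \<le> (\<Sum>k\<le>m. sqrt_coeff k)"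
proof -
  have "(\<Sum>k\<le>m. sqrt_coeff k) = (-1) ^ m * ((- (1/2)) gchoose m)"
    using gbinomial_sum_lower_neg[of "1/2::real" m]
    by (simp add: sqrt_coeff_def mult.commute)
  also have "\<dots> = (of_nat m - 1/2) gchoose m"
    by (simp add: gbinomial_minus power_mult_distrib[symmetric])
  finally have "fact m * (\<Sum>k\<le>m. sqrt_coeff k) = (\<Prod>i<m. of_nat m - 1/2 - of_nat i)"
    by (simp add: gbinomial_mult_fact atLeast0LessThan)
  also have "\<dots> > 0"
    by (rule prod_pos) (simp add: of_nat_less_iff[symmetric] del: of_nat_less_iff)
  finally show ?thesis
    by (simp add: zero_less_mult_iff)
qed

lemma sqrt_coeff_tail_partial_sum: "(\<Sum>k<n. \<bar>sqrt_coeff (Suc k)\<bar>) \<le> 1"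
proof -
  have "(\<Sum>k<Suc n. sqrt_coeff k) = 1 - (\<Sum>k<n. \<bar>sqrt_coeff (Suc k)\<bar>)"
    by (simp only: sum.lessThan_Suc_shift)
      (simp add: abs_of_neg[OF sqrt_coeff_Suc_neg] sum_negf)
  then show ?thesis
    using sqrt_coeff_partial_sum_nonneg[of n] by (simp add: lessThan_Suc_atMost)
qed

lemma summable_sqrt_coeff_tail: "summable (\<lambda>k. \<bar>sqrt_coeff (Suc k)\<bar>)"
  by (rule summableI_nonneg_bounded[OF _ sqrt_coeff_tail_partial_sum]) simp

lemma suminf_sqrt_coeff_tail_le: "(\<Sum>k. \<bar>sqrt_coeff (Suc k)\<bar>) \<le> 1"
  by (rule suminf_le_const[OF summable_sqrt_coeff_tail sqrt_coeff_tail_partial_sum])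

lemma summable_sqrt_coeff: "summable (\<lambda>k. \<bar>sqrt_coeff k\<bar>)"
  using summable_sqrt_coeff_tail summable_Suc_iff by blast

lemma sqrt_coeff_convolution:
  "(\<Sum>i\<le>k. sqrt_coeff i * sqrt_coeff (k - i)) = (if k = 0 then 1 else if k = 1 then -1 else 0)"
proof -
  have "sqrt_coeff i * sqrt_coeff (k - i) = (-1) ^ k * (((1/2) gchoose i) * ((1/2) gchoose (k - i)))"
    if "i \<le> k" for i
  proof -
    have "(-1::real) ^ i * (-1) ^ (k - i) = (-1) ^ k"
      using that by (simp flip: power_add)
    then show ?thesis
      unfolding sqrt_coeff_def by (metis mult.assoc mult.left_commute)
  qed
  then have "(\<Sum>i\<le>k. sqrt_coeff i * sqrt_coeff (k - i))
      = (-1) ^ k * (\<Sum>i\<le>k. ((1/2::real) gchoose i) * ((1/2) gchoose (k - i)))"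
    by (simp add: sum_distrib_left)
  also have "\<dots> = (-1) ^ k * ((1/2 + 1/2) gchoose k)"
    by (simp only: gbinomial_Vandermonde flip: atLeast0AtMost)
  also have "\<dots> = (-1) ^ k * of_nat (1 choose k)"
    by (simp add: binomial_gbinomial)
  finally show ?thesis
    by (cases k) (auto simp: binomial_eq_0)
qed

definition sqrt_one_minus :: "'a::cstar_algebra \<Rightarrow> 'a" where
  "sqrt_one_minus x = (\<Sum>k. sqrt_coeff k *\<^sub>R x ^ k)"

lemma norm_sqrt_series_term_le:
  fixes x :: "'a::cstar_algebra"
  assumes "norm x \<le> 1"
  shows "norm (sqrt_coeff k *\<^sub>R x ^ k) \<le> \<bar>sqrt_coeff k\<bar>"
proof -
  have "norm (x ^ k) \<le> 1"
    using norm_power_ineq[of x k] power_le_one[OF norm_ge_zero assms, of k] by linarith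
  then show ?thesis
    by (simp add: mult_left_le)
qed

lemma summable_norm_sqrt_series:
  "norm (x::'a::cstar_algebra) \<le> 1 \<Longrightarrow> summable (\<lambda>k. norm (sqrt_coeff k *\<^sub>R x ^ k))"
  using norm_sqrt_series_term_le[of x]
  by (intro summable_comparison_test'[OF summable_sqrt_coeff, where N = 0]) simp

lemma summable_sqrt_series:
  "norm (x::'a::cstar_algebra) \<le> 1 \<Longrightarrow> summable (\<lambda>k. sqrt_coeff k *\<^sub>R x ^ k)"
  by (rule summable_norm_cancel[OF summable_norm_sqrt_series])

lemma sqrt_one_minus_square:
  fixes x :: "'a::cstar_algebra"
  assumes "norm x \<le> 1"
  shows "sqrt_one_minus x * sqrt_one_minus x = 1 - x"
proof -
  have "sqrt_one_minus x * sqrt_one_minus x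
      = (\<Sum>k. \<Sum>i\<le>k. (sqrt_coeff i *\<^sub>R x ^ i) * (sqrt_coeff (k - i) *\<^sub>R x ^ (k - i)))"
    unfolding sqrt_one_minus_def
    by (rule Cauchy_product[OF summable_norm_sqrt_series[OF assms] summable_norm_sqrt_series[OF assms]])
  also have "\<dots> = (\<Sum>k. (\<Sum>i\<le>k. sqrt_coeff i * sqrt_coeff (k - i)) *\<^sub>R x ^ k)"
    by (simp add: scaleR_sum_left power_add[symmetric] mult.commute)
  also have "\<dots> = (\<Sum>k. (if k = 0 then 1 else 0) + (if k = 1 then - x else 0))"
    by (rule suminf_cong) (simp add: sqrt_coeff_convolution)
  also have "\<dots> = 1 + - x"
    using sums_add[OF sums_single[of 0 "\<lambda>_. 1::'a"] sums_single[of 1 "\<lambda>_. - x"]]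
    by (simp add: sums_iff)
  finally show ?thesis
    by simp
qed

lemma self_adjoint_sqrt_one_minus:
  fixes x :: "'a::cstar_algebra"
  assumes "norm x \<le> 1" "cstar x = x"
  shows "cstar (sqrt_one_minus x) = sqrt_one_minus x"
  unfolding sqrt_one_minus_def using assms
  by (simp add: cstar_suminf summable_sqrt_series cstar_power)

lemma sqrt_one_minus_commute:
  fixes x y :: "'a::cstar_algebra"
  assumes "norm x \<le> 1" "y * x = x * y"
  shows "y * sqrt_one_minus x = sqrt_one_minus x * y"
  unfolding sqrt_one_minus_def
  using summable_sqrt_series[OF assms(1)] power_commuting_commutes[OF assms(2)[symmetric]]
  by (simp add: suminf_mult[symmetric] suminf_mult2)

lemma norm_one_minus_sqrt_one_minus_le:
  fixes x :: "'a::cstar_algebra"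
  assumes "norm x \<le> 1"
  shows "norm (1 - sqrt_one_minus x) \<le> 1"
proof -
  let ?f = "\<lambda>k. sqrt_coeff k *\<^sub>R x ^ k"
  have tail: "summable (\<lambda>k. norm (?f (Suc k)))"
    using summable_norm_sqrt_series[OF assms] by (subst summable_Suc_iff)
  have "1 - sqrt_one_minus x = - (\<Sum>k. ?f (Suc k))"
    using suminf_split_head[OF summable_sqrt_series[OF assms]] by (simp add: sqrt_one_minus_def)
  then have "norm (1 - sqrt_one_minus x) \<le> (\<Sum>k. norm (?f (Suc k)))"
    using summable_norm[OF tail] by simp
  also have "\<dots> \<le> (\<Sum>k. \<bar>sqrt_coeff (Suc k)\<bar>)"
    by (rule suminf_le[OF _ tail summable_sqrt_coeff_tail]) (rule norm_sqrt_series_term_le[OF assms])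
  also have "\<dots> \<le> 1"
    by (rule suminf_sqrt_coeff_tail_le)
  finally show ?thesis .
qed

definition is_inverse :: "'a::ring_1 \<Rightarrow> 'a \<Rightarrow> bool" where
  "is_inverse a b \<longleftrightarrow> a * b = 1 \<and> b * a = 1"

lemma is_inverse_commute:
  assumes "is_inverse a b" "y * a = a * y"
  shows "y * b = b * y"
proof -
  have "y * b = (b * a) * (y * b)"
    using assms(1) by (simp add: is_inverse_def)
  also have "\<dots> = b * (y * a) * b"
    using assms(2) by (simp add: mult.assoc)
  also have "\<dots> = b * y"
    using assms(1) by (simp add: is_inverse_def mult.assoc)
  finally show ?thesis .
qed

lemma is_inverse_unique: "is_inverse a b \<Longrightarrow> is_inverse a c \<Longrightarrow> b = c"
  unfolding is_inverse_def by (metis mult.assoc mult_1_left)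

lemma is_inverse_self_adjoint:
  "is_inverse a b \<Longrightarrow> cstar a = a \<Longrightarrow> cstar b = (b::'a::cstar_algebra)"
  unfolding is_inverse_def by (metis cstar_mult cstar_one is_inverse_def is_inverse_unique)

lemma ainv_eq: "is_inverse a b \<Longrightarrow> ainv a = b"
  unfolding ainv_def using is_inverse_unique by (auto simp: is_inverse_def)

lemma is_inverse_one_minus:
  fixes y :: "'a::cstar_algebra"
  assumes "norm y < 1"
  shows "is_inverse (1 - y) (\<Sum>n. y ^ n)"
proof -
  have "summable (\<lambda>n. norm (y ^ n))"
    by (rule summable_comparison_test[OF _ summable_geometric[of "norm y"]])
      (use assms norm_power_ineq in auto)
  then have s: "summable (\<lambda>n. y ^ n)"
    by (rule summable_norm_cancel)
  have "y * (\<Sum>n. y ^ n) = (\<Sum>n. y ^ n) - 1" "(\<Sum>n. y ^ n) * y = (\<Sum>n. y ^ n) - 1"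
    using suminf_split_head[OF s] suminf_mult[OF s, of y] suminf_mult2[OF s, of y]
    by (simp_all add: power_commutes)
  then show ?thesis
    by (simp add: is_inverse_def algebra_simps)
qed

section \<open>Squares of self-adjoint elements\<close>

text \<open>With \<open>w = f + i g\<close> one has \<open>w\<^sup>* w = w w\<^sup>* = s\<close>, so \<open>\<parallel>w\<parallel>\<^sup>2 = \<bar>s\<bar>\<close>; now
  \<open>2 f = w + w\<^sup>*\<close> and \<open>4 i f g = w\<^sup>2 - w\<^sup>*\<^sup>2\<close>.\<close>

lemma sum_squares_norm_bounds:
  fixes f g :: "'a::cstar_algebra"
  assumes f: "cstar f = f" and g: "cstar g = g" and fg: "f * g = g * f"
    and s: "f * f + g * g = s *\<^sub>R 1"
  shows "norm f ^ 2 \<le> \<bar>s\<bar>" and "norm (f * g) \<le> \<bar>s\<bar> / 2"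
proof -
  define w where "w = f + imult g"
  have cw: "cstar w = f - imult g"
    unfolding w_def using f g by (simp add: cstar_add)
  have "cstar w * w = s *\<^sub>R 1"
    unfolding cw unfolding w_def by (simp add: algebra_simps fg s[symmetric])
  then have nw: "norm w ^ 2 = \<bar>s\<bar>"
    by (metis cstar_identity norm_scaleR norm_one mult_1_right)
  have "2 *\<^sub>R f = w + cstar w"
    unfolding cw unfolding w_def by (simp add: scaleR_2)
  then have "2 * norm f \<le> 2 * norm w"
    by (metis norm_scaleR norm_triangle_ineq abs_numeral norm_cstar mult_2)
  then show "norm f ^ 2 \<le> \<bar>s\<bar>"
    by (metis nw norm_ge_zero power_mono mult_le_cancel_left_pos zero_less_numeral)
  have "4 *\<^sub>R imult (f * g) = w * w - cstar w * cstar w"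
    unfolding cw unfolding w_def
    by (simp add: algebra_simps fg scaleR_2[symmetric] flip: scaleR_add_left)
  then have "4 * norm (f * g) = norm (w * w - cstar w * cstar w)"
    by (metis norm_imult norm_scaleR abs_numeral)
  also have "\<dots> \<le> norm w * norm w + norm (cstar w) * norm (cstar w)"
    by (intro order_trans[OF norm_triangle_ineq4] add_mono norm_mult_ineq)
  also have "\<dots> = 2 * \<bar>s\<bar>"
    using nw by (simp add: power2_eq_square)
  finally show "norm (f * g) \<le> \<bar>s\<bar> / 2"
    by simp
qed

text \<open>By \<open>sa_square_cstar_mult_self\<close> below, this is the same cone as \<open>cstar_positive\<close>.\<close>

definition sa_square :: "'a::cstar_algebra \<Rightarrow> bool" where
  "sa_square c \<longleftrightarrow> (\<exists>g. cstar g = g \<and> c = g * g)"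

lemma sa_square_self_adjoint: "sa_square c \<Longrightarrow> cstar c = c"
  unfolding sa_square_def by (auto simp: cstar_mult)

lemma sa_square_mult_self: "cstar g = g \<Longrightarrow> sa_square (g * g)"
  unfolding sa_square_def by blast

lemma sa_square_one [simp]: "sa_square (1::'a::cstar_algebra)"
  using sa_square_mult_self[of "1::'a"] by simp

lemma sa_square_scaleR:
  assumes "sa_square c" "0 \<le> a"
  shows "sa_square (a *\<^sub>R c)"
proof -
  obtain g where g: "cstar g = g" "c = g * g"
    using assms(1) unfolding sa_square_def by blast
  then have "a *\<^sub>R c = (sqrt a *\<^sub>R g) * (sqrt a *\<^sub>R g)"
    using assms(2) by (simp add: real_sqrt_mult[symmetric])
  then show ?thesis
    using g by (metis cstar_scaleR sa_square_mult_self)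
qed

lemma norm_one_minus_square_le:
  fixes h :: "'a::cstar_algebra"
  assumes h: "cstar h = h" and n: "norm h \<le> 1"
  shows "norm (1 - h * h) \<le> 1"
proof -
  define y where "y = sqrt_one_minus (h * h)"
  have "norm (h * h) \<le> 1" "cstar (h * h) = h * h"
    using n h by (simp_all add: norm_square_self_adjoint[OF h] power_le_one cstar_mult)
  then have y: "cstar y = y" "y * y = 1 - h * h" "y * h = h * y"
    unfolding y_def
    by (simp_all add: self_adjoint_sqrt_one_minus sqrt_one_minus_square sqrt_one_minus_commute mult.assoc)
  then have "norm y ^ 2 \<le> 1"
    using sum_squares_norm_bounds(1)[OF y(1) h y(3), of 1] y(2) by simp
  then show ?thesis
    using norm_square_self_adjoint[OF y(1)] y(2) by simp
qed

lemma norm_scaleR_one_minus_sa_square_le: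
  fixes c :: "'a::cstar_algebra"
  assumes "sa_square c" "norm c \<le> t"
  shows "norm (t *\<^sub>R 1 - c) \<le> t"
proof (cases "t = 0")
  case True
  then show ?thesis
    using assms(2) by simp
next
  case False
  then have t: "t > 0"
    using assms(2) norm_ge_zero[of c] by linarith
  obtain g where g: "cstar g = g" "c = g * g"
    using assms(1) unfolding sa_square_def by blast
  define h where "h = (1 / sqrt t) *\<^sub>R g"
  have h: "cstar h = h"
    unfolding h_def using g by simp
  have hh: "h * h = (1 / t) *\<^sub>R c"
    unfolding h_def using g t by (simp add: real_sqrt_mult[symmetric])
  have "norm h ^ 2 \<le> 1"
    using assms(2) t by (simp add: norm_square_self_adjoint[OF h, symmetric] hh)
  then have "norm (1 - h * h) \<le> 1"
    by (intro norm_one_minus_square_le[OF h]) (simp add: power_le_one_iff)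
  moreover have "t *\<^sub>R 1 - c = t *\<^sub>R (1 - h * h)"
    using hh t by (simp add: algebra_simps)
  ultimately show ?thesis
    using t by (simp add: mult_left_le)
qed

lemma sa_square_if_norm_scaleR_one_minus_le:
  fixes c :: "'a::cstar_algebra"
  assumes c: "cstar c = c" and t: "0 < t" and n: "norm (t *\<^sub>R 1 - c) \<le> t"
  shows "sa_square c"
proof -
  define y where "y = 1 - (1 / t) *\<^sub>R c"
  have "y = (1 / t) *\<^sub>R (t *\<^sub>R 1 - c)"
    using t by (simp add: y_def algebra_simps)
  then have ny: "norm y \<le> 1"
    using n t by (simp add: divide_le_eq)
  have "cstar y = y"
    using c by (simp add: y_def)
  then have "sa_square (sqrt_one_minus y * sqrt_one_minus y)"
    by (intro sa_square_mult_self self_adjoint_sqrt_one_minus ny)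
  then have "sa_square (t *\<^sub>R (1 - y))"
    using t by (simp add: sqrt_one_minus_square[OF ny] sa_square_scaleR)
  then show ?thesis
    using t by (simp add: y_def)
qed

text \<open>\<open>\<surd>c = \<surd>\<parallel>c\<parallel> \<cdot> \<surd>(1 - x)\<close> with \<open>x = 1 - c/\<parallel>c\<parallel>\<close>, where \<open>\<parallel>x\<parallel> \<le> 1\<close> by the
  norm criterion. For \<open>c = 0\<close> the formula gives \<open>0\<close>, as \<open>1 / 0 = 0\<close>.\<close>

definition pos_sqrt :: "'a::cstar_algebra \<Rightarrow> 'a" where
  "pos_sqrt c = sqrt (norm c) *\<^sub>R sqrt_one_minus (1 - (1 / norm c) *\<^sub>R c)"

lemma norm_one_minus_normalized_le:
  fixes c :: "'a::cstar_algebra"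
  assumes "sa_square c"
  shows "norm (1 - (1 / norm c) *\<^sub>R c) \<le> 1"
proof (cases "c = 0")
  case False
  then have "1 - (1 / norm c) *\<^sub>R c = (1 / norm c) *\<^sub>R (norm c *\<^sub>R 1 - c)"
    by (simp add: algebra_simps)
  then show ?thesis
    using norm_scaleR_one_minus_sa_square_le[OF assms order_refl] False
    by (simp add: divide_le_eq)
qed simp

lemma
  fixes c :: "'a::cstar_algebra"
  assumes c: "sa_square c"
  shows pos_sqrt_self_adjoint: "cstar (pos_sqrt c) = pos_sqrt c"
    and pos_sqrt_square: "pos_sqrt c * pos_sqrt c = c"
    and sa_square_pos_sqrt: "sa_square (pos_sqrt c)"
    and pos_sqrt_commute: "y * c = c * y \<Longrightarrow> y * pos_sqrt c = pos_sqrt c * y"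
proof -
  define x where "x = 1 - (1 / norm c) *\<^sub>R c"
  have x: "norm x \<le> 1" "cstar x = x"
    using norm_one_minus_normalized_le[OF c] sa_square_self_adjoint[OF c] by (simp_all add: x_def)
  have def: "pos_sqrt c = sqrt (norm c) *\<^sub>R sqrt_one_minus x"
    by (simp add: pos_sqrt_def x_def)
  have B: "cstar (sqrt_one_minus x) = sqrt_one_minus x"
    by (rule self_adjoint_sqrt_one_minus[OF x])
  then show "cstar (pos_sqrt c) = pos_sqrt c"
    by (simp add: def)
  have "pos_sqrt c * pos_sqrt c = norm c *\<^sub>R (1 - x)"
    by (simp add: def sqrt_one_minus_square[OF x(1)] flip: real_sqrt_mult)
  then show "pos_sqrt c * pos_sqrt c = c"
    by (cases "c = 0") (simp_all add: x_def algebra_simps)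
  have "sa_square (sqrt_one_minus x)"
    by (rule sa_square_if_norm_scaleR_one_minus_le[OF B zero_less_one])
      (simp add: norm_one_minus_sqrt_one_minus_le[OF x(1)])
  then show "sa_square (pos_sqrt c)"
    by (simp add: def sa_square_scaleR)
  assume "y * c = c * y"
  then have "y * x = x * y"
    by (simp add: x_def algebra_simps)
  then show "y * pos_sqrt c = pos_sqrt c * y"
    by (simp add: def sqrt_one_minus_commute[OF x(1)])
qed

lemma pos_sqrt_mult_commute:
  fixes a b :: "'a::cstar_algebra"
  assumes a: "sa_square a" and b: "sa_square b" and ab: "a * b = b * a"
  shows "pos_sqrt a * pos_sqrt b = pos_sqrt b * pos_sqrt a"
  using pos_sqrt_commute[OF a ab[symmetric]] by (intro pos_sqrt_commute[OF b]) simp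

lemma sa_square_add:
  fixes a b :: "'a::cstar_algebra"
  assumes a: "sa_square a" and b: "sa_square b"
  shows "sa_square (a + b)"
proof (cases "norm a + norm b = 0")
  case True
  then show ?thesis
    using b by (simp add: add_nonneg_eq_0_iff)
next
  case False
  define t where "t = norm a + norm b"
  have t: "t > 0"
    using False by (simp add: t_def add_pos_nonneg order_le_neq_trans)
  have "norm (t *\<^sub>R 1 - (a + b)) \<le> norm (norm a *\<^sub>R 1 - a) + norm (norm b *\<^sub>R 1 - b)"
    by (rule order_trans[OF _ norm_triangle_ineq]) (simp add: t_def algebra_simps)
  also have "\<dots> \<le> t"
    unfolding t_def by (intro add_mono norm_scaleR_one_minus_sa_square_le a b order_refl)
  finally show ?thesis
    using sa_square_self_adjoint[OF a] sa_square_self_adjoint[OF b] t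
    by (intro sa_square_if_norm_scaleR_one_minus_le) (simp_all add: cstar_add)
qed

lemma sa_square_mult:
  fixes a b :: "'a::cstar_algebra"
  assumes a: "sa_square a" and b: "sa_square b" and ab: "a * b = b * a"
  shows "sa_square (a * b)"
proof -
  define f where "f = pos_sqrt a"
  define g where "g = pos_sqrt b"
  have fg: "f * g = g * f"
    unfolding f_def g_def by (rule pos_sqrt_mult_commute[OF a b ab])
  then have "a * b = (f * g) * (f * g)"
    by (metis f_def g_def pos_sqrt_square[OF a] pos_sqrt_square[OF b] mult.assoc)
  moreover have "cstar (f * g) = f * g"
    using pos_sqrt_self_adjoint[OF a] pos_sqrt_self_adjoint[OF b] fg
    by (simp add: cstar_mult f_def g_def)
  ultimately show ?thesis
    by (simp add: sa_square_mult_self)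
qed

lemma sa_square_inverse:
  fixes d b :: "'a::cstar_algebra"
  assumes d: "sa_square d" and i: "is_inverse d b"
  shows "sa_square b"
proof -
  have "b = d * (b * b)"
    using i by (simp add: is_inverse_def flip: mult.assoc)
  moreover have "b * d = d * b"
    using i by (simp add: is_inverse_def)
  ultimately show ?thesis
    using is_inverse_self_adjoint[OF i sa_square_self_adjoint[OF d]]
    by (metis sa_square_mult d sa_square_mult_self mult.assoc)
qed

lemma inverse_exists_scaleR_one_add:
  fixes m :: "'a::cstar_algebra"
  assumes m: "sa_square m" and t: "0 < t"
  shows "\<exists>z. is_inverse (t *\<^sub>R 1 + m) z"
proof -
  define s where "s = norm m"
  define y where "y = (1 / (t + s)) *\<^sub>R (s *\<^sub>R 1 - m)"
  have s: "s \<ge> 0"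
    by (simp add: s_def)
  have "norm y \<le> s / (t + s)"
    using norm_scaleR_one_minus_sa_square_le[OF m, of s] s t
    by (simp add: y_def s_def divide_right_mono)
  also have "\<dots> < 1"
    using s t by simp
  finally have "is_inverse (1 - y) (\<Sum>n. y ^ n)"
    by (rule is_inverse_one_minus)
  moreover have "(t + s) *\<^sub>R y = s *\<^sub>R 1 - m"
    using s t by (simp add: y_def)
  then have "t *\<^sub>R 1 + m = (t + s) *\<^sub>R (1 - y)"
    unfolding scaleR_right_diff_distrib by (simp add: algebra_simps)
  ultimately have "is_inverse (t *\<^sub>R 1 + m) ((1 / (t + s)) *\<^sub>R (\<Sum>n. y ^ n))"
    using s t by (simp add: is_inverse_def)
  then show ?thesis ..
qed

lemma norm_le_of_sa_square_add_eq_scalar: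
  fixes u v :: "'a::cstar_algebra"
  assumes u: "sa_square u" and v: "sa_square v" and s: "u + v = s *\<^sub>R 1"
  shows "norm u \<le> \<bar>s\<bar>"
proof -
  have v_eq: "v = s *\<^sub>R 1 - u"
    using s by (simp add: algebra_simps)
  have "u * v = v * u"
    unfolding v_eq by (simp add: algebra_simps)
  define f where "f = pos_sqrt u"
  define g where "g = pos_sqrt v"
  have fg: "f * g = g * f"
    unfolding f_def g_def by (rule pos_sqrt_mult_commute[OF u v \<open>u * v = v * u\<close>])
  have "f * f + g * g = s *\<^sub>R 1"
    unfolding f_def g_def using pos_sqrt_square[OF u] pos_sqrt_square[OF v] s by simp
  from sum_squares_norm_bounds(1)[OF pos_sqrt_self_adjoint[OF u] pos_sqrt_self_adjoint[OF v],
      folded f_def g_def, OF fg this]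
  show ?thesis
    using norm_square_self_adjoint[OF pos_sqrt_self_adjoint[OF u]] pos_sqrt_square[OF u]
    by (simp add: f_def)
qed

section \<open>Positivity of \<open>x\<^sup>* x\<close>\<close>

lemma sa_square_antisym:
  fixes c :: "'a::cstar_algebra"
  assumes "sa_square c" "sa_square (- c)"
  shows "c = 0"
  using norm_le_of_sa_square_add_eq_scalar[OF assms, of 0] by simp

lemma sa_square_closed:
  fixes u :: "'a::cstar_algebra"
  assumes u: "cstar u = u" and approx: "\<And>d. d > 0 \<Longrightarrow> \<exists>a. sa_square a \<and> norm (u - a) < d"
  shows "sa_square u"
proof (cases "u = 0")
  case True
  then show ?thesis
    using sa_square_mult_self[of "0::'a"] by simp
next
  case False
  define t where "t = norm u"
  have t: "t > 0"
    using False by (simp add: t_def)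
  have key: "norm (t *\<^sub>R 1 - u) \<le> t + 3 * d" if d: "d > 0" for d
  proof -
    obtain a where a: "sa_square a" "norm (u - a) < d"
      using approx[OF d] by blast
    have eq: "t *\<^sub>R 1 - u = (norm a *\<^sub>R 1 - a) + (t - norm a) *\<^sub>R 1 + (a - u)"
      by (simp add: algebra_simps)
    have "norm (t *\<^sub>R 1 - u)
        \<le> norm (norm a *\<^sub>R 1 - a) + norm ((t - norm a) *\<^sub>R (1::'a)) + norm (a - u)"
      by (subst eq) (rule order_trans[OF norm_triangle_ineq add_right_mono[OF norm_triangle_ineq]])
    also have "\<dots> \<le> norm a + \<bar>t - norm a\<bar> + norm (u - a)"
      using norm_scaleR_one_minus_sa_square_le[OF a(1) order_refl]
      by (simp add: norm_minus_commute)
    finally have "norm (t *\<^sub>R 1 - u) \<le> norm a + \<bar>t - norm a\<bar> + norm (u - a)" .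
    moreover have "\<bar>t - norm a\<bar> \<le> norm (u - a)" "norm a \<le> t + norm (u - a)"
      using norm_triangle_ineq3[of u a] norm_triangle_ineq4[of u "u - a"] by (simp_all add: t_def)
    ultimately show ?thesis
      using a(2) by linarith
  qed
  have "norm (t *\<^sub>R 1 - u) \<le> t"
  proof (rule field_le_epsilon)
    fix e :: real
    assume "e > 0"
    then show "norm (t *\<^sub>R 1 - u) \<le> t + e"
      using key[of "e / 3"] by simp
  qed
  then show ?thesis
    by (rule sa_square_if_norm_scaleR_one_minus_le[OF u t])
qed

lemma norm_mult_one_minus_le:
  fixes z :: "'a::cstar_algebra"
  assumes z: "sa_square z" and z': "sa_square (1 - z)"
  shows "norm (z * (1 - z)) \<le> 1/4"
proof -
  define f where "f = pos_sqrt z"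
  define g where "g = pos_sqrt (1 - z)"
  have fg: "f * g = g * f"
    unfolding f_def g_def by (rule pos_sqrt_mult_commute[OF z z']) (simp add: algebra_simps)
  have sq: "f * f + g * g = 1 *\<^sub>R 1"
    using pos_sqrt_square[OF z] pos_sqrt_square[OF z'] by (simp add: f_def g_def)
  have "norm (f * g) \<le> 1/2"
    using sum_squares_norm_bounds(2)[OF pos_sqrt_self_adjoint[OF z] pos_sqrt_self_adjoint[OF z'],
        folded f_def g_def, OF fg sq] by simp
  have "(f * g) * (f * g) = (f * f) * (g * g)"
    by (metis fg mult.assoc)
  then have "norm (z * (1 - z)) \<le> norm (f * g) * norm (f * g)"
    using pos_sqrt_square[OF z] pos_sqrt_square[OF z'] norm_mult_ineq
    by (metis f_def g_def)
  also have "\<dots> \<le> 1/2 * (1/2)"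
    using \<open>norm (f * g) \<le> 1/2\<close> by (intro mult_mono) auto
  finally show ?thesis
    by simp
qed

text \<open>The witness is \<open>u\<^sup>2 (e + w)\<^sup>-\<^sup>1\<close>: as \<open>u\<^sup>2 = u w\<close>, its distance to \<open>u\<close> is
  \<open>e \<parallel>u (e + w)\<^sup>-\<^sup>1\<parallel>\<close>, and \<open>z = e (e + w)\<^sup>-\<^sup>1\<close> has \<open>1 - z = w (e + w)\<^sup>-\<^sup>1\<close>.\<close>

lemma sa_square_near_of_square_eq_mult:
  fixes u w :: "'a::cstar_algebra"
  assumes u: "cstar u = u" and w: "sa_square w" and uw: "u * w = w * u" and uu: "u * u = u * w"
    and e: "0 < e"
  shows "\<exists>a. sa_square a \<and> norm (u - a) ^ 2 \<le> e * norm u / 4"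
proof -
  obtain k where k: "is_inverse (e *\<^sub>R 1 + w) k"
    using inverse_exists_scaleR_one_add[OF w e] by blast
  have k_sq: "sa_square k"
    using e by (intro sa_square_inverse[OF _ k] sa_square_add sa_square_scaleR w) simp_all
  have uk: "u * k = k * u" and wk: "w * k = k * w"
    by (rule is_inverse_commute[OF k], simp add: algebra_simps uw)+
  define a where "a = (u * u) * k"
  have "sa_square a"
    unfolding a_def using uk
    by (intro sa_square_mult[OF sa_square_mult_self[OF u] k_sq]) (metis mult.assoc)
  have "u = (u * (e *\<^sub>R 1 + w)) * k"
    using k by (simp add: is_inverse_def mult.assoc)
  then have ua: "u - a = e *\<^sub>R (u * k)"
    unfolding a_def by (simp add: algebra_simps flip: uu)
  define z where "z = e *\<^sub>R k"
  have z1: "1 - z = w * k"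
    using k by (simp add: z_def is_inverse_def algebra_simps)
  have "sa_square z"
    using e k_sq by (simp add: z_def sa_square_scaleR)
  moreover have "sa_square (1 - z)"
    unfolding z1 by (rule sa_square_mult[OF w k_sq wk])
  ultimately have z_bound: "norm (z * (1 - z)) \<le> 1/4"
    by (rule norm_mult_one_minus_le)
  have zz: "z * (1 - z) = e *\<^sub>R (w * k * k)"
    unfolding z1 by (simp add: z_def wk mult.assoc)
  have "norm (u * (z * (1 - z))) \<le> norm u * (1/4)"
    using z_bound by (metis norm_mult_ineq mult_left_mono norm_ge_zero order_trans)
  have "cstar (u * k) = u * k"
    using u uk sa_square_self_adjoint[OF k_sq] by (simp add: cstar_mult)
  then have "norm (u - a) ^ 2 = e\<^sup>2 * norm ((u * k) * (u * k))"
    unfolding ua by (simp add: norm_square_self_adjoint power_mult_distrib)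
  also have "(u * k) * (u * k) = u * (w * k * k)"
    using uk uu by (metis mult.assoc)
  also have "e\<^sup>2 * norm (u * (w * k * k)) = e * norm (u * (z * (1 - z)))"
    using e by (simp add: zz power2_eq_square)
  also have "\<dots> \<le> e * (norm u * (1/4))"
    using e \<open>norm (u * (z * (1 - z))) \<le> norm u * (1/4)\<close> by simp
  finally show ?thesis
    using \<open>sa_square a\<close> by auto
qed

lemma sa_square_of_square_eq_mult:
  fixes u w :: "'a::cstar_algebra"
  assumes u: "cstar u = u" and w: "sa_square w" and uw: "u * w = w * u" and uu: "u * u = u * w"
  shows "sa_square u"
proof (rule sa_square_closed[OF u])
  fix d :: real
  assume d: "d > 0"
  define e where "e = d\<^sup>2 / (norm u + 1)"
  have "norm u + 1 > 0"
    by (simp add: add_nonneg_pos)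
  then have "e > 0" "e * (norm u + 1) = d\<^sup>2"
    using d by (simp_all add: e_def)
  then have e: "e > 0" "e * norm u + e = d\<^sup>2"
    by (simp_all add: algebra_simps)
  then obtain a where a: "sa_square a" "norm (u - a) ^ 2 \<le> e * norm u / 4"
    using sa_square_near_of_square_eq_mult[OF u w uw uu] by blast
  have "e * norm u \<ge> 0"
    using e by simp
  then have "e * norm u / 4 < d\<^sup>2"
    using e by linarith
  with a(2) have "norm (u - a) ^ 2 < d\<^sup>2"
    by linarith
  then have "norm (u - a) < d"
    using d by (simp add: power_less_imp_less_base)
  with a(1) show "\<exists>a. sa_square a \<and> norm (u - a) < d"
    by blast
qed

text \<open>The positive and negative parts of \<open>c\<close> are \<open>(\<bar>c\<bar> \<pm> c)/2\<close>, where \<open>\<bar>c\<bar>\<close> is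
  the positive square root of \<open>c\<^sup>2\<close>.\<close>

lemma self_adjoint_decomposition:
  fixes c :: "'a::cstar_algebra"
  assumes c: "cstar c = c"
  obtains p n where "sa_square p" "sa_square n" "c = p - n" "n * p = 0"
proof -
  have cc: "sa_square (c * c)"
    by (rule sa_square_mult_self[OF c])
  define a where "a = pos_sqrt (c * c)"
  have a: "cstar a = a" "a * a = c * c" "sa_square a" "c * a = a * c"
    unfolding a_def using pos_sqrt_self_adjoint[OF cc] pos_sqrt_square[OF cc] sa_square_pos_sqrt[OF cc]
      pos_sqrt_commute[OF cc, of c] by (simp_all add: mult.assoc)
  have w: "sa_square (2 *\<^sub>R a)"
    using a(3) by (simp add: sa_square_scaleR)
  have "sa_square (a + c)"
    using a c by (intro sa_square_of_square_eq_mult[OF _ w]) (simp_all add: cstar_add algebra_simps scaleR_2)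
  moreover have "sa_square (a - c)"
    using a c by (intro sa_square_of_square_eq_mult[OF _ w]) (simp_all add: algebra_simps scaleR_2)
  ultimately have "sa_square ((1/2) *\<^sub>R (a + c))" "sa_square ((1/2) *\<^sub>R (a - c))"
    by (simp_all add: sa_square_scaleR)
  moreover have "c = (1/2) *\<^sub>R (a + c) - (1/2) *\<^sub>R (a - c)"
    by (simp add: algebra_simps scaleR_2[symmetric] flip: scaleR_add_left)
  moreover have "(1/2) *\<^sub>R (a - c) * ((1/2) *\<^sub>R (a + c)) = 0"
    using a by (simp add: algebra_simps)
  ultimately show ?thesis
    by (rule that)
qed

lemma norm_less_one_if_is_inverse_one_minus:
  fixes e b :: "'a::cstar_algebra"
  assumes e: "sa_square e" and e1: "norm e \<le> 1" and b: "is_inverse (1 - e) b"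
  shows "norm e < 1"
proof -
  have d: "sa_square (1 - e)"
    using sa_square_self_adjoint[OF e] e1
    by (intro sa_square_if_norm_scaleR_one_minus_le[of _ 1]) simp_all
  have b_sq: "sa_square b"
    by (rule sa_square_inverse[OF d b])
  define M where "M = norm b + 1"
  have M: "M > 0" "norm b / M \<le> 1" "0 < 1 / M" "1 / M \<le> 1"
    by (simp_all add: M_def add_nonneg_pos)
  have "sa_square (1 - (1 / M) *\<^sub>R b)"
    using M sa_square_self_adjoint[OF b_sq]
    by (intro sa_square_if_norm_scaleR_one_minus_le[of _ 1]) simp_all
  moreover have "(1 - e) * b = b * (1 - e)"
    using b by (simp add: is_inverse_def)
  then have "e * b = b * e"
    by (simp add: algebra_simps)
  ultimately have "sa_square ((1 - e) * (1 - (1 / M) *\<^sub>R b))"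
    by (intro sa_square_mult[OF d]) (simp_all add: algebra_simps)
  moreover have "(1 - e) * (1 - (1 / M) *\<^sub>R b) = 1 - e - (1 / M) *\<^sub>R ((1 - e) * b)"
    by (simp add: right_diff_distrib)
  then have "(1 - e) * (1 - (1 / M) *\<^sub>R b) = 1 - e - (1 / M) *\<^sub>R 1"
    using b by (simp add: is_inverse_def)
  moreover have "e + (1 - e - (1 / M) *\<^sub>R 1) = (1 - 1 / M) *\<^sub>R 1"
    by (simp add: algebra_simps)
  ultimately have "norm e \<le> \<bar>1 - 1 / M\<bar>"
    using norm_le_of_sa_square_add_eq_scalar[OF e] by metis
  then have "norm e \<le> 1 - 1 / M"
    using M(4) by simp
  then show ?thesis
    using M(3) by linarith
qed

lemma is_inverse_one_minus_mult_swap: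
  fixes a b w :: "'a::ring_1"
  assumes "is_inverse (1 - b * a) w"
  shows "is_inverse (1 - a * b) (1 + a * w * b)"
proof -
  have "(1 - a * b) * (1 + a * w * b) = 1 + a * ((1 - b * a) * w) * b - a * b"
    "(1 + a * w * b) * (1 - a * b) = 1 + a * (w * (1 - b * a)) * b - a * b"
    by (simp_all add: algebra_simps)
  then show ?thesis
    using assms by (simp add: is_inverse_def)
qed

text \<open>If \<open>z \<noteq> 0\<close>, scale \<open>z\<close> so that \<open>\<parallel>z z\<^sup>*\<parallel> = 1\<close>. Then \<open>1 - z\<^sup>* z\<close> is invertible, hence
  so is \<open>1 - z z\<^sup>*\<close>, which is impossible for an element \<open>z z\<^sup>*\<close> of the cone of norm 1.\<close>

lemma eq_0_if_sa_square_mult_cstar: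
  fixes z :: "'a::cstar_algebra"
  assumes p: "sa_square (z * cstar z)" and m: "sa_square (- (cstar z * z))"
  shows "z = 0"
proof (rule ccontr)
  assume "z \<noteq> 0"
  define t where "t = norm z ^ 2"
  have t: "t > 0"
    using \<open>z \<noteq> 0\<close> by (simp add: t_def)
  obtain W where W: "is_inverse (t *\<^sub>R 1 + - (cstar z * z)) W"
    using inverse_exists_scaleR_one_add[OF m t] by blast
  define a where "a = (1 / t) *\<^sub>R z"
  have "1 - cstar z * a = (1 / t) *\<^sub>R (t *\<^sub>R 1 + - (cstar z * z))"
    using t by (simp add: a_def algebra_simps)
  then have "is_inverse (1 - cstar z * a) (t *\<^sub>R W)"
    using W t by (simp add: is_inverse_def)
  then have "is_inverse (1 - a * cstar z) (1 + a * (t *\<^sub>R W) * cstar z)"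
    by (rule is_inverse_one_minus_mult_swap)
  moreover have "sa_square (a * cstar z)"
    using p t by (simp add: a_def sa_square_scaleR)
  moreover have "norm (a * cstar z) = 1"
    using t cstar_identity[of "cstar z"] by (simp add: a_def t_def)
  ultimately show False
    using norm_less_one_if_is_inverse_one_minus by fastforce
qed

lemma sa_square_mult_cstar_add:
  fixes z :: "'a::cstar_algebra"
  shows "sa_square (z * cstar z + cstar z * z)"
proof -
  define h where "h = z + cstar z"
  define k where "k = imult (z - cstar z)"
  have "cstar h = h" "cstar k = k"
    by (simp_all add: h_def k_def cstar_add)
  then have "sa_square ((1/2) *\<^sub>R (h * h + k * k))"
    by (intro sa_square_scaleR sa_square_add sa_square_mult_self) simp_all
  moreover have "h * h + k * k = 2 *\<^sub>R (z * cstar z + cstar z * z)"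
    by (simp add: h_def k_def algebra_simps scaleR_2)
  ultimately show ?thesis
    by simp
qed

text \<open>Write \<open>x\<^sup>* x = p - n\<close> as above and \<open>z = x n\<close>. Then
  \<open>z\<^sup>* z = - n\<^sup>3\<close>, while \<open>z z\<^sup>* = (z z\<^sup>* + z\<^sup>* z) + n\<^sup>3\<close> lies in the cone; so \<open>z = 0\<close>
  and \<open>n = 0\<close>.\<close>

lemma sa_square_cstar_mult_self:
  fixes x :: "'a::cstar_algebra"
  shows "sa_square (cstar x * x)"
proof -
  define c where "c = cstar x * x"
  have "cstar c = c"
    by (simp add: c_def cstar_mult)
  then obtain p n where p: "sa_square p" and n: "sa_square n" and c: "c = p - n" and np: "n * p = 0"
    by (rule self_adjoint_decomposition)
  have n_sa: "cstar n = n"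
    by (rule sa_square_self_adjoint[OF n])
  define z where "z = x * n"
  have zz: "cstar z * z = - (n * n * n)"
  proof -
    have "cstar z * z = n * c * n"
      by (simp add: z_def c_def cstar_mult n_sa mult.assoc)
    also have "\<dots> = - (n * n * n)"
      by (simp add: c algebra_simps np flip: mult.assoc)
    finally show ?thesis .
  qed
  have nnn: "sa_square (n * n * n)"
    using sa_square_mult[OF n sa_square_mult_self[OF n_sa]] by (simp add: mult.assoc)
  have "z * cstar z = (z * cstar z + cstar z * z) + n * n * n"
    by (simp add: zz)
  moreover have "sa_square ((z * cstar z + cstar z * z) + n * n * n)"
    by (rule sa_square_add[OF sa_square_mult_cstar_add nnn])
  ultimately have "sa_square (z * cstar z)"
    by metis
  then have "z = 0"
    by (rule eq_0_if_sa_square_mult_cstar) (simp add: zz nnn)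
  then have "(n * n) * (n * n) = 0"
    using zz by (simp add: mult.assoc)
  then have "n = 0"
    using n_sa by (metis self_adjoint_square_eq_0 cstar_mult)
  then show ?thesis
    using c p by (simp add: c_def)
qed

lemma sa_square_root_unique:
  fixes p r :: "'a::cstar_algebra"
  assumes p: "sa_square p" and r: "sa_square r" and pr: "p * r = r * p" and sq: "p * p = r * r"
  shows "p = r"
proof -
  define w where "w = p - r"
  have w: "cstar w = w"
    using sa_square_self_adjoint[OF p] sa_square_self_adjoint[OF r] by (simp add: w_def)
  have wp: "w * p = p * w" and wr: "w * r = r * w"
    using pr by (simp_all add: w_def algebra_simps)
  have "w * (p + r) = 0"
    using sq pr by (simp add: w_def algebra_simps)
  then have sum: "w * w * p + w * w * r = 0"
    by (simp add: mult.assoc flip: distrib_left)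
  have wwp: "sa_square (w * w * p)"
    by (rule sa_square_mult[OF sa_square_mult_self[OF w] p]) (metis wp mult.assoc)
  have wwr: "sa_square (w * w * r)"
    by (rule sa_square_mult[OF sa_square_mult_self[OF w] r]) (metis wr mult.assoc)
  have wwp0: "w * w * p = 0"
    by (rule sa_square_antisym[OF wwp]) (use wwr sum in \<open>simp add: add_eq_0_iff\<close>)
  have wwr0: "w * w * r = 0"
    by (rule sa_square_antisym[OF wwr]) (use wwp sum in \<open>simp add: add_eq_0_iff2\<close>)
  have cancel: "w * q = 0" if q: "sa_square q" "w * q = q * w" "w * w * q = 0" for q
  proof (rule self_adjoint_square_eq_0)
    show "cstar (w * q) = w * q"
      using w q(2) sa_square_self_adjoint[OF q(1)] by (simp add: cstar_mult)
    show "(w * q) * (w * q) = 0"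
      using q(2,3) by (metis mult.assoc mult_zero_left)
  qed
  have "w * p = 0" "w * r = 0"
    using cancel[OF p wp wwp0] cancel[OF r wr wwr0] by simp_all
  then have "w * w = 0"
    by (simp add: w_def right_diff_distrib)
  then show ?thesis
    using self_adjoint_square_eq_0[OF w] by (simp add: w_def)
qed

lemma cstar_positive_imp_sa_square: "cstar_positive p \<Longrightarrow> sa_square p"
  unfolding cstar_positive_def using sa_square_cstar_mult_self by blast

lemma cstar_positive_sqrt_unique:
  fixes p q :: "'a::cstar_algebra"
  assumes p: "cstar_positive p" and q: "cstar_positive q" and sq: "p * p = q * q"
  shows "p = q"
proof -
  have p': "sa_square p" and q': "sa_square q"
    using p q by (simp_all add: cstar_positive_imp_sa_square)
  have pp: "sa_square (p * p)"
    by (rule sa_square_mult_self[OF sa_square_self_adjoint[OF p']])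
  define r where "r = pos_sqrt (p * p)"
  have "p = r"
    unfolding r_def using pos_sqrt_commute[OF pp, of p]
    by (intro sa_square_root_unique[OF p' sa_square_pos_sqrt[OF pp]])
      (simp_all add: mult.assoc pos_sqrt_square[OF pp])
  moreover have "q = r"
    unfolding r_def sq using pos_sqrt_commute[OF pp[unfolded sq], of q]
    by (intro sa_square_root_unique[OF q' sa_square_pos_sqrt[OF pp[unfolded sq]]])
      (simp_all add: mult.assoc pos_sqrt_square[OF pp[unfolded sq]])
  ultimately show ?thesis
    by simp
qed

lemma cabs_eq:
  fixes T s :: "'a::cstar_algebra"
  assumes "cstar_positive s" "s * s = cstar T * T"
  shows "cabs T = s"
  unfolding cabs_def
proof (rule the_equality)
  fix p
  assume "cstar_positive p \<and> p * p = cstar T * T"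
  then show "p = s"
    using assms cstar_positive_sqrt_unique[of p s] by simp
qed (use assms in simp)

lemma moore_penrose_unique:
  fixes T X Y :: "'a::cstar_algebra"
  assumes X: "T * X * T = T" "X * T * X = X" "cstar (T * X) = T * X" "cstar (X * T) = X * T"
    and Y: "T * Y * T = T" "Y * T * Y = Y" "cstar (T * Y) = T * Y" "cstar (Y * T) = Y * T"
  shows "X = Y"
proof -
  have TX: "T * X = cstar X * cstar T" and XT: "X * T = cstar T * cstar X"
    and TY: "T * Y = cstar Y * cstar T" and YT: "Y * T = cstar T * cstar Y"
    using X(3,4) Y(3,4) by (simp_all add: cstar_mult)
  have TsY: "cstar T * (cstar Y * cstar T) = cstar T"
    using arg_cong[OF Y(1), of cstar] by (simp add: cstar_mult mult.assoc)
  have TsX: "cstar T * cstar X * cstar T = cstar T"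
    using arg_cong[OF X(1), of cstar] by (simp add: cstar_mult flip: mult.assoc)
  have "X = X * (cstar X * cstar T)"
    using X(2) by (simp add: TX[symmetric] mult.assoc)
  also have "\<dots> = X * (cstar X * cstar T) * (cstar Y * cstar T)"
    by (simp add: TsY mult.assoc)
  also have "\<dots> = X * T * Y"
    using X(2) by (simp add: TX[symmetric] TY[symmetric] mult.assoc)
  finally have X_eq: "X = X * T * Y" .
  have "Y = (cstar T * cstar Y) * Y"
    using Y(2) by (simp add: YT[symmetric])
  also have "\<dots> = (cstar T * cstar X) * (cstar T * cstar Y) * Y"
    by (simp add: TsX flip: mult.assoc)
  also have "\<dots> = X * T * Y"
    using Y(2) by (simp add: XT[symmetric] YT[symmetric] mult.assoc)
  finally show ?thesis
    using X_eq by simp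
qed

lemma mp_inv_eq:
  fixes T X :: "'a::cstar_algebra"
  assumes "T * X * T = T" "X * T * X = X" "cstar (T * X) = T * X" "cstar (X * T) = X * T"
  shows "mp_inv T = X"
  unfolding mp_inv_def
  using assms moore_penrose_unique by (intro the_equality) blast+

section \<open>Matched projections of idempotents\<close>

lemma is_inverse_of_square:
  assumes "is_inverse (a * a) v"
  shows "is_inverse a (a * v)"
proof -
  have "a * v = v * a"
    by (rule is_inverse_commute[OF assms]) (simp add: mult.assoc)
  then show ?thesis
    using assms by (simp add: is_inverse_def mult.assoc)
qed

lemma mult_eq_imp_mult_assoc: "a * b = c \<Longrightarrow> a * (b * z) = c * (z::'a::semigroup_mult)"
  by (simp flip: mult.assoc)

context
  fixes Q R Ri Ki :: "'a::cstar_algebra"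
  assumes Q_idem: "Q * Q = Q"
    and R_sa_square: "sa_square R" and R_square: "R * R = (Q + cstar Q - 1) * (Q + cstar Q - 1)"
    and R_Q: "R * Q = Q * R" and R_cstar_Q: "R * cstar Q = cstar Q * R"
    and Ri: "is_inverse R Ri" and Ki: "is_inverse (1 + R) Ki"
begin

lemma cstar_Ri: "cstar Ri = Ri"
  using is_inverse_self_adjoint[OF Ri sa_square_self_adjoint[OF R_sa_square]] .

text \<open>Oriented left to right, these relations normalise the words in \<open>Q, Q\<^sup>*, R, Ri, Ki\<close>
  occurring below: \<open>R, Ri, Ki\<close> move to the left of \<open>Q, Q\<^sup>*\<close>, and \<open>Q\<^sup>* Q\<close> is
  eliminated using \<open>R\<^sup>2 = (Q + Q\<^sup>* - 1)\<^sup>2\<close>.\<close>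

lemma word_relations:
  shows "cstar Q * cstar Q = cstar Q" "Q * R = R * Q" "cstar Q * R = R * cstar Q"
    and "Q * Ri = Ri * Q" "cstar Q * Ri = Ri * cstar Q" "Q * Ki = Ki * Q"
    and "cstar Q * Ki = Ki * cstar Q" "Ki * R = R * Ki" "Ki * Ri = Ri * Ki"
    and "cstar Q * Q = R * R - Q * cstar Q + Q + cstar Q - 1"
    and "R * Ri = 1" "Ri * R = 1" "R * Ki = 1 - Ki" "Ri * Ki = Ri - Ki"
proof -
  show QsQs: "cstar Q * cstar Q = cstar Q"
    using arg_cong[OF Q_idem, of cstar] by (simp add: cstar_mult)
  show "Q * R = R * Q" "cstar Q * R = R * cstar Q"
    using R_Q R_cstar_Q by simp_all
  show "Q * Ri = Ri * Q" "cstar Q * Ri = Ri * cstar Q"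
    using R_Q R_cstar_Q by (auto intro: is_inverse_commute[OF Ri])
  show "Q * Ki = Ki * Q" "cstar Q * Ki = Ki * cstar Q"
    using R_Q R_cstar_Q by (auto simp: algebra_simps intro!: is_inverse_commute[OF Ki])
  show "Ki * R = R * Ki" "Ki * Ri = Ri * Ki"
    using Ri by (auto simp: algebra_simps is_inverse_def intro!: is_inverse_commute[OF Ki, symmetric])
  show "cstar Q * Q = R * R - Q * cstar Q + Q + cstar Q - 1"
    unfolding R_square by (simp add: algebra_simps Q_idem QsQs)
  show "R * Ri = 1" "Ri * R = 1"
    using Ri by (simp_all add: is_inverse_def)
  show "R * Ki = 1 - Ki"
    using Ki by (simp add: is_inverse_def algebra_simps)
  have "Ri * ((1 + R) * Ki) = Ri"
    using Ki by (simp add: is_inverse_def)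
  then show "Ri * Ki = Ri - Ki"
    using Ri by (simp add: is_inverse_def algebra_simps flip: mult.assoc)
qed

lemmas word_rules = Q_idem word_relations Q_idem[THEN mult_eq_imp_mult_assoc]
  word_relations[THEN mult_eq_imp_mult_assoc] mult.assoc ring_distribs cstar_mult cstar_add cstar_Ri

lemma cabs_cstar_idempotent: "cabs (cstar Q) = Q * cstar Q * Ri"
proof (rule cabs_eq)
  have "sa_square Ri"
    by (rule sa_square_inverse[OF R_sa_square Ri])
  then have "cstar (pos_sqrt Ri) = pos_sqrt Ri"
    and "pos_sqrt Ri * (pos_sqrt Ri * cstar Q) = Ri * cstar Q"
    by (simp_all add: pos_sqrt_self_adjoint mult_eq_imp_mult_assoc[OF pos_sqrt_square])
  then have "cstar (pos_sqrt Ri * cstar Q) * (pos_sqrt Ri * cstar Q) = Q * cstar Q * Ri"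
    using word_relations(5) by (simp add: cstar_mult mult.assoc)
  then show "cstar_positive (Q * cstar Q * Ri)"
    unfolding cstar_positive_def by metis
  show "Q * cstar Q * Ri * (Q * cstar Q * Ri) = cstar (cstar Q) * cstar Q"
    by (simp add: word_rules)
qed

lemma mp_inv_cabs_cstar_idempotent:
  "mp_inv (Q * cstar Q * Ri) = Q * cstar Q * Ri * Ri * Ri"
  by (rule mp_inv_eq) (simp_all add: word_rules)

lemma ainv_cabs_cstar_idempotent_add_one:
  "ainv (Q * cstar Q * Ri + 1) = Q * cstar Q * Ri * Ri * Ki + 1 - Q * cstar Q * Ri * Ri"
  by (rule ainv_eq) (simp add: is_inverse_def word_rules)

lemma matched_proj_eq: "matched_proj Q = (1/2) *\<^sub>R (1 + (Q + cstar Q - 1) * Ri)"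
  unfolding matched_proj_def cabs_cstar_idempotent mp_inv_cabs_cstar_idempotent
    ainv_cabs_cstar_idempotent_add_one
  by (simp add: word_rules)

end

lemma matched_proj_idempotent:
  fixes Q :: "'a::cstar_algebra"
  assumes QQ: "Q * Q = Q"
  shows "matched_proj Q = (1/2) *\<^sub>R
    (1 + (Q + cstar Q - 1) * ainv (pos_sqrt ((Q + cstar Q - 1) * (Q + cstar Q - 1))))"
proof -
  define T where "T = Q + cstar Q - 1"
  have QsQs: "cstar Q * cstar Q = cstar Q"
    using arg_cong[OF QQ, of cstar] by (simp add: cstar_mult)
  note idem = QQ QsQs QQ[THEN mult_eq_imp_mult_assoc] QsQs[THEN mult_eq_imp_mult_assoc]
  have "cstar T = T"
    by (simp add: T_def cstar_add add.commute)
  then have TT: "sa_square (T * T)"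
    by (rule sa_square_mult_self)
  define R where "R = pos_sqrt (T * T)"
  have R: "sa_square R" "R * R = T * T"
    unfolding R_def using TT by (simp_all add: sa_square_pos_sqrt pos_sqrt_square)
  have "Q * (T * T) = (T * T) * Q"
    by (simp add: T_def algebra_simps idem)
  then have RQ: "R * Q = Q * R"
    unfolding R_def by (simp add: pos_sqrt_commute[OF TT])
  have "cstar Q * (T * T) = (T * T) * cstar Q"
    by (simp add: T_def algebra_simps idem)
  then have RQs: "R * cstar Q = cstar Q * R"
    unfolding R_def by (simp add: pos_sqrt_commute[OF TT])
  define k where "k = imult (Q - cstar Q)"
  have "T * T = 1 *\<^sub>R 1 + k * k"
    by (simp add: T_def k_def algebra_simps idem)
  moreover have "cstar k = k"
    by (simp add: k_def)
  ultimately obtain V where "is_inverse (R * R) V"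
    using inverse_exists_scaleR_one_add[OF sa_square_mult_self, of k 1] R(2) by auto
  then have Ri: "is_inverse R (R * V)"
    by (rule is_inverse_of_square)
  obtain Ki where Ki: "is_inverse (1 + R) Ki"
    using inverse_exists_scaleR_one_add[OF R(1), of 1] by auto
  have "matched_proj Q = (1/2) *\<^sub>R (1 + T * (R * V))"
    unfolding T_def by (rule matched_proj_eq[OF QQ R(1) _ RQ RQs Ri Ki]) (simp add: R(2) T_def)
  then show ?thesis
    using ainv_eq[OF Ri] by (simp add: R_def T_def)
qed

theorem proposition3p1:
  fixes Q :: "'a::cstar_algebra"
  assumes "Q * Q = Q"
  shows "matched_proj (1 - Q) = 1 - matched_proj Q"
proof -
  define T where "T = Q + cstar Q - 1"
  have "(1 - Q) * (1 - Q) = 1 - Q"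
    using assms by (simp add: algebra_simps)
  moreover have "1 - Q + cstar (1 - Q) - 1 = - T"
    by (simp add: T_def)
  ultimately have "matched_proj (1 - Q) = (1/2) *\<^sub>R (1 - T * ainv (pos_sqrt (T * T)))"
    using matched_proj_idempotent[of "1 - Q"] by simp
  moreover have "matched_proj Q = (1/2) *\<^sub>R (1 + T * ainv (pos_sqrt (T * T)))"
    unfolding T_def by (rule matched_proj_idempotent[OF assms])
  moreover have "(1/2) *\<^sub>R (1 - X) = 1 - (1/2) *\<^sub>R (1 + X)" for X :: 'a
    by (metis add_diff_cancel_left scaleR_half_double scaleR_right_diff_distrib)
  ultimately show ?thesis
    by simp
qed

end
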